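(* Let $(X,\overline{x})=(X_1,X_2,\overline{x},\delta_1,\delta_2,\delta_3)$ be a reachable pointed lasso automaton. Then $\nu\mathrm{C}(X,\overline{x})\cong\mathsf{free}(X)$ as pointed lasso automata.
   Context: $\Sigma$ is a finite alphabet, $\Sigma^{\ast+}=\Sigma^\ast\times\Sigma^+$ the lassos. A pointed lasso automaton is $(X_1,X_2,\overline{x},\delta_1,\delta_2,\delta_3)$ with disjoint $X_1,X_2$, $\overline{x}\in X_1$, $\delta_1:X_1\times\Sigma\to X_1$, $\delta_2:X_1\times\Sigma\to X_2$, $\delta_3:X_2\times\Sigma\to X_2$; extend $\delta_1,\delta_3$ to words, $\delta_\circ(x,av)=\delta_3(\delta_2(x,a),v)$ for $x\in X_1$, $\delta(x,(u,v))=\delta_\circ(\delta_1(x,u),v)$. It is reachable if every $x\in X_1$ is $\delta_1(\overline{x},w)$ for some $w$ and every $y\in X_2$ is $\delta(\overline{x},(u,v))$ for some lasso. For a pair $(C_1,C_2)$ of equivalences on $\Sigma^\ast$, $\Sigma^{\ast+}$ (satisfying the needed compatibility), $Q(C_1,C_2)$ denotes the pointed lasso automaton $(\Sigma^\ast/C_1,\Sigma^{\ast+}/C_2,[\epsilon],\sigma_1,\sigma_2,\sigma_3)$ with $\sigma_1([w])(a)=[wa]$, $\sigma_2([w])(a)=[(w,a)]$, $\sigma_3([(u,v)])(a)=[(u,va)]$. $\nu\mathrm{C}(X,\overline{x})=Q(\ker\delta_1^\sharp,\ker\delta^\sharp)$ computed on the reachable part of $X$, where $\ker\delta_1^\sharp=\{(u,v)\mid\forall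 x:\delta_1(x,u)=\delta_1(x,v)\}$ and $\ker\delta^\sharp=\{((u,v),(u',v'))\mid\forall x:\delta(x,(u,v))=\delta(x,(u',v'))\}$, $x$ ranging over first-sort states. A set of equations is a bisimulation equivalence $E=(E_1,E_2)$ on the initial automaton $(\Sigma^\ast,\Sigma^{\ast+})$ with transitions $\sigma_1(u,a)=ua$, $\sigma_2(u,a)=(u,a)$, $\sigma_3((u,v),a)=(u,va)$ (i.e. $(u,u')\in E_1\Rightarrow(ua,u'a)\in E_1,((u,a),(u',a))\in E_2$ and $((u,v),(u',v'))\in E_2\Rightarrow((u,va),(u',v'a))\in E_2$); $X$ satisfies $E$ if for all $x\in X_1$, $\delta_1(x,\cdot)$ identifies $E_1$-related words and $\delta(x,\cdot)$ identifies $E_2$-related lassos. $\mathsf{Eq}(X)$ is the largest set of equations satisfied by $X$, and $\mathsf{free}(X)=Q(\mathsf{Eq}(X))$. *)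

theory Defs
  imports Main
begin

definition lassos :: "('c list \<times> 'c list) set" where
  "lassos = {(u, v). v \<noteq> []}"

text \<open>A pointed lasso automaton: first-sort states st1 (in type 's), second-sort
  states st2 (in type 't; so the two sorts are disjoint), initial state pt,
  and transition functions d1, d2, d3.\<close>

record ('s, 't, 'c) lasso_aut =
  st1 :: "'s set"
  st2 :: "'t set"
  pt  :: 's
  d1  :: "'s \<Rightarrow> 'c \<Rightarrow> 's"
  d2  :: "'s \<Rightarrow> 'c \<Rightarrow> 't"
  d3  :: "'t \<Rightarrow> 'c \<Rightarrow> 't"

definition lasso_automaton :: "('s, 't, 'c) lasso_aut \<Rightarrow> bool" where
  "lasso_automaton X \<longleftrightarrow> pt X \<in> st1 X
     \<and> (\<forall>x\<in>st1 X. \<forall>a. d1 X x a \<in> st1 X \<and> d2 X x a \<in> st2 X)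
     \<and> (\<forall>y\<in>st2 X. \<forall>a. d3 X y a \<in> st2 X)"

definition run1 :: "('s, 't, 'c) lasso_aut \<Rightarrow> 's \<Rightarrow> 'c list \<Rightarrow> 's" where
  "run1 X x w = fold (\<lambda>a s. d1 X s a) w x"

definition run3 :: "('s, 't, 'c) lasso_aut \<Rightarrow> 't \<Rightarrow> 'c list \<Rightarrow> 't" where
  "run3 X y w = fold (\<lambda>a s. d3 X s a) w y"

text \<open>delta_circ(x, a v) = delta_3(delta_2(x,a), v) (only meaningful for nonempty words).\<close>
definition runc :: "('s, 't, 'c) lasso_aut \<Rightarrow> 's \<Rightarrow> 'c list \<Rightarrow> 't" where
  "runc X x w = run3 X (d2 X x (hd w)) (tl w)"

definition run :: "('s, 't, 'c) lasso_aut \<Rightarrow> 's \<Rightarrow> 'c list \<times> 'c list \<Rightarrow> 't" where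
  "run X x l = runc X (run1 X x (fst l)) (snd l)"

definition reachable :: "('s, 't, 'c) lasso_aut \<Rightarrow> bool" where
  "reachable X \<longleftrightarrow> (\<forall>x\<in>st1 X. \<exists>w. x = run1 X (pt X) w)
     \<and> (\<forall>y\<in>st2 X. \<exists>l\<in>lassos. y = run X (pt X) l)"

definition Q :: "'c list rel \<Rightarrow> ('c list \<times> 'c list) rel
     \<Rightarrow> ('c list set, ('c list \<times> 'c list) set, 'c) lasso_aut" where
  "Q C1 C2 = \<lparr> st1 = UNIV // C1, st2 = lassos // C2, pt = C1 `` {[]},
      d1 = (\<lambda>S a. C1 `` {(SOME w. w \<in> S) @ [a]}),
      d2 = (\<lambda>S a. C2 `` {((SOME w. w \<in> S), [a])}),
      d3 = (\<lambda>T a. C2 `` {(fst (SOME l. l \<in> T), snd (SOME l. l \<in> T) @ [a])}) \<rparr>"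

definition reach1 :: "('s, 't, 'c) lasso_aut \<Rightarrow> 's set" where
  "reach1 X = {run1 X (pt X) w | w. True}"

definition ker1 :: "('s, 't, 'c) lasso_aut \<Rightarrow> 'c list rel" where
  "ker1 X = {(u, v). \<forall>x\<in>reach1 X. run1 X x u = run1 X x v}"

definition ker2 :: "('s, 't, 'c) lasso_aut \<Rightarrow> ('c list \<times> 'c list) rel" where
  "ker2 X = {(l, l'). l \<in> lassos \<and> l' \<in> lassos \<and>
                (\<forall>x\<in>reach1 X. run X x l = run X x l')}"

definition nuC :: "('s, 't, 'c) lasso_aut
     \<Rightarrow> ('c list set, ('c list \<times> 'c list) set, 'c) lasso_aut" where
  "nuC X = Q (ker1 X) (ker2 X)"

text \<open>Sets of equations: bisimulation equivalences on the initial automaton.\<close>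
definition is_equations :: "'c list rel \<times> ('c list \<times> 'c list) rel \<Rightarrow> bool" where
  "is_equations E \<longleftrightarrow> equiv UNIV (fst E) \<and> equiv lassos (snd E)
     \<and> (\<forall>u u' a. (u, u') \<in> fst E \<longrightarrow>
           (u @ [a], u' @ [a]) \<in> fst E \<and> ((u, [a]), (u', [a])) \<in> snd E)
     \<and> (\<forall>u v u' v' a. ((u, v), (u', v')) \<in> snd E \<longrightarrow>
           ((u, v @ [a]), (u', v' @ [a])) \<in> snd E)"

definition satisfies :: "('s, 't, 'c) lasso_aut
     \<Rightarrow> 'c list rel \<times> ('c list \<times> 'c list) rel \<Rightarrow> bool" where
  "satisfies X E \<longleftrightarrow> (\<forall>x\<in>st1 X.
       (\<forall>(u, u')\<in>fst E. run1 X x u = run1 X x u')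
     \<and> (\<forall>(l, l')\<in>snd E. run X x l = run X x l'))"

definition is_Eq :: "('s, 't, 'c) lasso_aut
     \<Rightarrow> 'c list rel \<times> ('c list \<times> 'c list) rel \<Rightarrow> bool" where
  "is_Eq X E \<longleftrightarrow> is_equations E \<and> satisfies X E
     \<and> (\<forall>E'. is_equations E' \<and> satisfies X E' \<longrightarrow> fst E' \<subseteq> fst E \<and> snd E' \<subseteq> snd E)"

definition Eq :: "('s, 't, 'c) lasso_aut \<Rightarrow> 'c list rel \<times> ('c list \<times> 'c list) rel" where
  "Eq X = (THE E. is_Eq X E)"

definition free :: "('s, 't, 'c) lasso_aut
     \<Rightarrow> ('c list set, ('c list \<times> 'c list) set, 'c) lasso_aut" where
  "free X = Q (fst (Eq X)) (snd (Eq X))"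

definition lasso_iso :: "('s, 't, 'c) lasso_aut \<Rightarrow> ('p, 'q, 'c) lasso_aut \<Rightarrow> bool" where
  "lasso_iso A B \<longleftrightarrow> (\<exists>f g. bij_betw f (st1 A) (st1 B) \<and> bij_betw g (st2 A) (st2 B)
     \<and> f (pt A) = pt B
     \<and> (\<forall>x\<in>st1 A. \<forall>a. f (d1 A x a) = d1 B (f x) a \<and> g (d2 A x a) = d2 B (f x) a)
     \<and> (\<forall>y\<in>st2 A. \<forall>a. g (d3 A y a) = d3 B (g y) a))"

end

theory Submission
  imports Defs
begin

text \<open>For a reachable automaton the states over which the kernels quantify are all first-sort
  states, so a set of equations is satisfied by X exactly when it lies inside the kernel pair.
  The kernel pair is itself a set of equations, hence it is the largest one: Eq(X) is the kernel
  pair and free(X) coincides with nuC(X).\<close>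

lemma run1_Nil [simp]: "run1 X x [] = x"
  by (simp add: run1_def)

lemma run1_snoc [simp]: "run1 X x (u @ [a]) = d1 X (run1 X x u) a"
  by (simp add: run1_def)

lemma run3_snoc [simp]: "run3 X y (v @ [a]) = d3 X (run3 X y v) a"
  by (simp add: run3_def)

lemma run_singleton [simp]: "run X x (u, [a]) = d2 X (run1 X x u) a"
  by (simp add: run_def runc_def run3_def)

lemma run_snoc [simp]: "v \<noteq> [] \<Longrightarrow> run X x (u, v @ [a]) = d3 X (run X x (u, v)) a"
  by (cases v) (simp_all add: run_def runc_def)

lemma run1_in_st1:
  assumes "lasso_automaton X" "x \<in> st1 X"
  shows "run1 X x w \<in> st1 X"
  using assms(2)
  by (induction w rule: rev_induct) (use assms(1) in \<open>simp_all add: lasso_automaton_def\<close>)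

lemma reach1_eq_st1:
  assumes "lasso_automaton X" "reachable X"
  shows "reach1 X = st1 X"
proof
  show "reach1 X \<subseteq> st1 X"
    using assms(1) run1_in_st1[OF assms(1)] by (auto simp: reach1_def lasso_automaton_def)
  show "st1 X \<subseteq> reach1 X"
    using assms(2) by (auto simp: reachable_def reach1_def)
qed

lemma is_equations_ker: "is_equations (ker1 X, ker2 X)"
  unfolding is_equations_def
  by (auto simp: equiv_def refl_on_def sym_def trans_def ker1_def ker2_def lassos_def)

lemma satisfies_iff_subset_ker:
  assumes "reach1 X = st1 X" "is_equations E"
  shows "satisfies X E \<longleftrightarrow> fst E \<subseteq> ker1 X \<and> snd E \<subseteq> ker2 X"
proof -
  have "snd E \<subseteq> lassos \<times> lassos"
    using assms(2) by (auto simp: is_equations_def equiv_def refl_on_def)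
  then show ?thesis
    using assms(1) by (fastforce simp: satisfies_def ker1_def ker2_def)
qed

lemma is_Eq_ker:
  assumes "lasso_automaton X" "reachable X"
  shows "is_Eq X (ker1 X, ker2 X)"
  unfolding is_Eq_def
  using satisfies_iff_subset_ker[OF reach1_eq_st1[OF assms]] is_equations_ker
  by (metis fst_conv snd_conv order_refl)

lemma Eq_eqI:
  assumes "is_Eq X E"
  shows "Eq X = E"
  unfolding Eq_def
proof (rule the_equality)
  fix E' assume "is_Eq X E'"
  then have "fst E' \<subseteq> fst E \<and> snd E' \<subseteq> snd E" "fst E \<subseteq> fst E' \<and> snd E \<subseteq> snd E'"
    using assms unfolding is_Eq_def by blast+
  then show "E' = E" by (simp add: prod_eq_iff subset_antisym)
qed (rule assms)

lemma lasso_iso_refl: "lasso_iso A A"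
  unfolding lasso_iso_def by (intro exI[of _ id]) simp

theorem mainTheorem14:
  fixes X :: "('s, 't, 'c :: finite) lasso_aut"
  assumes "lasso_automaton X" and "reachable X"
  shows "lasso_iso (nuC X) (free X)"
proof -
  have "Eq X = (ker1 X, ker2 X)"
    using Eq_eqI[OF is_Eq_ker[OF assms]] .
  then have "free X = nuC X"
    by (simp add: free_def nuC_def)
  then show ?thesis
    by (simp add: lasso_iso_refl)
qed

end
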